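(* Let $V$ be a grading-restricted vertex algebra, $W$ a $V$-module, $n\in\mathbb Z_+$, and let $\Phi:V^{\otimes n}\to\widetilde W_{z_1,\dots,z_n}$ be a linear map having the $L(-1)$-derivative property. Then: (a) for $v_1,\dots,v_n\in V$, $w'\in W'$, $(z_1,\dots,z_n)\in F_n\mathbb C$ and $z\in\mathbb C$, $$\langle w',e^{zL_W(-1)}\Phi(v_1\otimes\cdots\otimes v_n)(z_1,\dots,z_n)\rangle=\langle w',\Phi(v_1\otimes\cdots\otimes v_n)(z_1+z,\dots,z_n+z)\rangle;$$ (b) for $v_1,\dots,v_n\in V$, $w'\in W'$, $(z_1,\dots,z_n)\in F_n\mathbb C$, $1\le i\le n$ and $z\in\mathbb C$ with $(z_1,\dots,z_{i-1},z_i+z,z_{i+1},\dots,z_n)\in F_n\mathbb C$, the power series expansion in $z$ of $\langle w',\Phi(v_1\otimes\cdots\otimes v_n)(z_1,\dots,z_{i-1},z_i+z,z_{i+1},\dots,z_n)\rangle$ equals the power series $\langle w',\Phi(v_1\otimes\cdots\otimes v_{i-1}\otimes e^{zL_V(-1)}v_i\otimes v_{i+1}\otimes\cdots\otimes v_n)(z_1,\dots,z_n)\rangle$ in $z$; in particular the latter power series converges absolutely to the former function in the disk $|z|<\min_{j\neq k}|z_j-z_k|$.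
   Context: $V$ is a grading-restricted vertex algebra over $\mathbb C$ with vertex operator map $Y_V$, vacuum $\mathbf 1$ and operator $L_V(-1)$ ($L_V(-1)u$ is the coefficient of $x$ in $Y_V(u,x)\mathbf 1$). $W=\coprod_{n\in\mathbb C}W_{(n)}$ is a grading-restricted generalized $V$-module ($W_{(n)}=0$ for $\mathrm{Re}\,n$ sufficiently negative) with vertex operator map $Y_W$ and operators $L_W(0)$, $L_W(-1)$, where $L_W(-1)$ raises weights by $1$. $W'=\coprod_nW_{(n)}^*$, $\overline W=\prod_nW_{(n)}$, $\langle\cdot,\cdot\rangle$ the pairing; $e^{zL_W(-1)}$ is a well-defined operator on $\overline W$. $F_n\mathbb C=\{(z_1,\dots,z_n)\in\mathbb C^n:z_i\ne z_j\ (i\ne j)\}$. $\widetilde W_{z_1,\dots,z_n}$ is the space of maps $f:F_n\mathbb C\to\overline W$ such that $\langle w',f(z_1,\dots,z_n)\rangle$ is a rational function with only possible poles at $z_i=z_j$ ($i\ne j$) for every $w'\in W'$. A linear map $\Phi:V^{\otimes n}\to\widetilde W_{z_1,\dots,z_n}$ has the $L(-1)$-derivative property if (i) $\frac{\partial}{\partial z_i}\langle w',\Phi(v_1\otimes\cdots\otimes v_n)(z_1,\dots,z_n)\rangle=\langle w',\Phi(v_1\otimes\cdots\otimes v_{i-1}\otimes L_V(-1)v_i\otimes v_{i+1}\otimes\cdots\otimes v_n)(z_1,\dots,z_n)\rangle$ for all $i$, $v_j\in V$, $w'\in W'$, and (ii) $\big(\sum_{i=1}^n\frac{\partial}{\partial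 z_i}\big)\langle w',\Phi(v_1\otimes\cdots\otimes v_n)(z_1,\dots,z_n)\rangle=\langle w',L_W(-1)\Phi(v_1\otimes\cdots\otimes v_n)(z_1,\dots,z_n)\rangle$. *)

theory Defs
  imports "HOL-Analysis.Analysis"
begin

text \<open>There is no class of complex vector spaces in the distribution, so a complex
vector space is a type together with a scalar multiplication s :: complex => 'a => 'a
satisfying the locale vector_space s.  Complex itself is a complex vector space via (*).\<close>

definition fin_dim :: "(complex \<Rightarrow> 'a::ab_group_add \<Rightarrow> 'a) \<Rightarrow> 'a set \<Rightarrow> bool" where
  "fin_dim s S \<longleftrightarrow> (\<exists>B. finite B \<and> S \<subseteq> module.span s B)"

definition graded_direct_sum :: "(complex \<Rightarrow> 'a::ab_group_add \<Rightarrow> 'a) \<Rightarrow> ('i \<Rightarrow> 'a set) \<Rightarrow> bool" where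
  "graded_direct_sum s G \<longleftrightarrow>
     (\<forall>n. module.subspace s (G n)) \<and>
     (\<forall>w. \<exists>!c. (\<forall>n. c n \<in> G n) \<and> finite {n. c n \<noteq> 0} \<and> w = sum c {n. c n \<noteq> 0})"

text \<open>Y u v n is the mode u_n v, i.e. Y(u,x)v = sum_n (u_n v) x^(-n-1).\<close>

definition Jacobi_modes ::
  "(complex \<Rightarrow> 'w::ab_group_add \<Rightarrow> 'w) \<Rightarrow> ('v \<Rightarrow> 'v \<Rightarrow> int \<Rightarrow> 'v) \<Rightarrow> ('v \<Rightarrow> 'w \<Rightarrow> int \<Rightarrow> 'w)
     \<Rightarrow> 'v \<Rightarrow> 'v \<Rightarrow> 'w \<Rightarrow> bool" where
  "Jacobi_modes s YV YW u v w \<longleftrightarrow>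
    (\<forall>l m n::int. \<exists>K0. \<forall>K\<ge>K0.
       (\<Sum>i<K. s ((of_int m :: complex) gchoose i)
                   (YW (YV u v (l + int i)) w (m + n - int i)))
     = (\<Sum>i<K. s ((-1) ^ i * ((of_int l :: complex) gchoose i))
                   (YW u (YW v w (n + int i)) (l + m - int i)
                    - s ((-1) powi l) (YW v (YW u w (m + int i)) (l + n - int i)))))"

definition grading_restricted_VA ::
  "(complex \<Rightarrow> 'v::ab_group_add \<Rightarrow> 'v) \<Rightarrow> (int \<Rightarrow> 'v set) \<Rightarrow> ('v \<Rightarrow> 'v \<Rightarrow> int \<Rightarrow> 'v) \<Rightarrow> 'v \<Rightarrow> bool" where
  "grading_restricted_VA s G Y one \<longleftrightarrow>
     vector_space s \<and> graded_direct_sum s G \<and> (\<forall>n. fin_dim s (G n)) \<and>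
     (\<exists>N. \<forall>n<N. G n = {0}) \<and>
     (\<forall>v n. Vector_Spaces.linear s s (\<lambda>u. Y u v n)) \<and>
     (\<forall>u n. Vector_Spaces.linear s s (\<lambda>v. Y u v n)) \<and>
     (\<forall>u v. \<exists>N. \<forall>n\<ge>N. Y u v n = 0) \<and>
     (\<forall>m k n u v. u \<in> G m \<longrightarrow> v \<in> G k \<longrightarrow> Y u v n \<in> G (m + k - n - 1)) \<and>
     one \<in> G 0 \<and>
     (\<forall>v n. Y one v n = (if n = -1 then v else 0)) \<and>
     (\<forall>u n. n \<ge> 0 \<longrightarrow> Y u one n = 0) \<and> (\<forall>u. Y u one (-1) = u) \<and>
     (\<forall>u v w. Jacobi_modes s Y Y u v w)"

text \<open>L_V(-1)u is the coefficient of x in Y(u,x)1, i.e. the mode u_{-2} 1.\<close>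
definition LVm1 :: "('v \<Rightarrow> 'v \<Rightarrow> int \<Rightarrow> 'v) \<Rightarrow> 'v \<Rightarrow> 'v \<Rightarrow> 'v" where
  "LVm1 Y one u = Y u one (-2)"

definition grading_restricted_gen_module ::
  "(complex \<Rightarrow> 'v::ab_group_add \<Rightarrow> 'v) \<Rightarrow> (int \<Rightarrow> 'v set) \<Rightarrow> ('v \<Rightarrow> 'v \<Rightarrow> int \<Rightarrow> 'v) \<Rightarrow> 'v \<Rightarrow>
   (complex \<Rightarrow> 'w::ab_group_add \<Rightarrow> 'w) \<Rightarrow> (complex \<Rightarrow> 'w set) \<Rightarrow> ('v \<Rightarrow> 'w \<Rightarrow> int \<Rightarrow> 'w) \<Rightarrow>
   ('w \<Rightarrow> 'w) \<Rightarrow> ('w \<Rightarrow> 'w) \<Rightarrow> bool" where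
  "grading_restricted_gen_module sV GV Y one sW GW YW L0 L1 \<longleftrightarrow>
     vector_space sW \<and> graded_direct_sum sW GW \<and> (\<forall>n. fin_dim sW (GW n)) \<and>
     (\<exists>N::real. \<forall>n. Re n < N \<longrightarrow> GW n = {0}) \<and>
     (\<forall>w n. Vector_Spaces.linear sV sW (\<lambda>u. YW u w n)) \<and>
     (\<forall>u n. Vector_Spaces.linear sW sW (\<lambda>w. YW u w n)) \<and>
     (\<forall>u w. \<exists>N. \<forall>n\<ge>N. YW u w n = 0) \<and>
     (\<forall>m k n u w. u \<in> GV m \<longrightarrow> w \<in> GW k \<longrightarrow>
                  YW u w n \<in> GW (of_int m + k - of_int n - 1)) \<and>
     (\<forall>w n. YW one w n = (if n = -1 then w else 0)) \<and>
     (\<forall>u v w. Jacobi_modes sW Y YW u v w) \<and>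
     Vector_Spaces.linear sW sW L0 \<and>
     (\<forall>n. L0 ` GW n \<subseteq> GW n) \<and>
     (\<forall>n w. w \<in> GW n \<longrightarrow> (\<exists>K. ((\<lambda>x. L0 x - sW n x) ^^ K) w = 0)) \<and>
     (\<forall>m u w k. u \<in> GV m \<longrightarrow>
        L0 (YW u w k) - YW u (L0 w) k = sW (of_int m - of_int k - 1) (YW u w k)) \<and>
     Vector_Spaces.linear sW sW L1 \<and>
     (\<forall>n. L1 ` GW n \<subseteq> GW (n + 1)) \<and>
     (\<forall>u w k. YW (LVm1 Y one u) w k = sW (- of_int k) (YW u w (k - 1))) \<and>
     (\<forall>u w k. L1 (YW u w k) - YW u (L1 w) k = YW (LVm1 Y one u) w k)"

text \<open>Elements of overline W = prod_n W_(n) are represented as functions wb with wb n in W_(n).\<close>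
definition in_Wbar :: "(complex \<Rightarrow> 'w set) \<Rightarrow> (complex \<Rightarrow> 'w) \<Rightarrow> bool" where
  "in_Wbar GW wb \<longleftrightarrow> (\<forall>n. wb n \<in> GW n)"

text \<open>Elements of W' = coprod_n W_(n)^* are linear functionals on W vanishing on all but
finitely many homogeneous subspaces.\<close>
definition in_Wdual :: "(complex \<Rightarrow> 'w::ab_group_add \<Rightarrow> 'w) \<Rightarrow> (complex \<Rightarrow> 'w set) \<Rightarrow> ('w \<Rightarrow> complex) \<Rightarrow> bool" where
  "in_Wdual sW GW w' \<longleftrightarrow> Vector_Spaces.linear sW (*) w' \<and>
     (\<exists>S. finite S \<and> (\<forall>n. n \<notin> S \<longrightarrow> (\<forall>x\<in>GW n. w' x = 0)))"

definition pairing :: "(complex \<Rightarrow> 'w set) \<Rightarrow> ('w \<Rightarrow> complex) \<Rightarrow> (complex \<Rightarrow> 'w) \<Rightarrow> complex" where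
  "pairing GW w' wb = (\<Sum>n\<in>{n. \<exists>x\<in>GW n. w' x \<noteq> 0}. w' (wb n))"

definition Lbar :: "('w \<Rightarrow> 'w) \<Rightarrow> (complex \<Rightarrow> 'w) \<Rightarrow> (complex \<Rightarrow> 'w)" where
  "Lbar L1 wb = (\<lambda>n. L1 (wb (n - 1)))"

text \<open>e^{z L_W(-1)} acting on overline W; the sum in each component is finite because
W is grading restricted.\<close>
definition expLbar :: "(complex \<Rightarrow> 'w::ab_group_add \<Rightarrow> 'w) \<Rightarrow> ('w \<Rightarrow> 'w) \<Rightarrow> complex \<Rightarrow>
     (complex \<Rightarrow> 'w) \<Rightarrow> (complex \<Rightarrow> 'w)" where
  "expLbar sW L1 z wb = (\<lambda>n. \<Sum>k\<in>{k::nat. wb (n - of_nat k) \<noteq> 0}.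
        sW (z ^ k / fact k) ((L1 ^^ k) (wb (n - of_nat k))))"

text \<open>n-tuples are indexed by a finite type 'n, n = CARD('n).\<close>
definition vupd :: "'a ^ 'n \<Rightarrow> 'n \<Rightarrow> 'a \<Rightarrow> 'a ^ 'n" where
  "vupd v i x = (\<chi> j. if j = i then x else v $ j)"

definition Fconf :: "(complex ^ 'n) set" where
  "Fconf = {z. \<forall>i j. i \<noteq> j \<longrightarrow> z $ i \<noteq> z $ j}"

definition rational_Fn :: "(complex ^ 'n \<Rightarrow> complex) \<Rightarrow> bool" where
  "rational_Fn f \<longleftrightarrow> (\<exists>A c N. finite (A :: ('n \<Rightarrow> nat) set) \<and>
     (\<forall>z\<in>Fconf. f z = (\<Sum>\<alpha>\<in>A. c \<alpha> * (\<Prod>i\<in>UNIV. (z $ i) ^ \<alpha> i)) /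
                        (\<Prod>i\<in>UNIV. \<Prod>j\<in>UNIV. if i = j then 1 else (z $ i - z $ j) ^ N)))"

definition in_Wtilde :: "(complex \<Rightarrow> 'w::ab_group_add \<Rightarrow> 'w) \<Rightarrow> (complex \<Rightarrow> 'w set) \<Rightarrow>
     (complex ^ 'n \<Rightarrow> complex \<Rightarrow> 'w) \<Rightarrow> bool" where
  "in_Wtilde sW GW f \<longleftrightarrow> (\<forall>z\<in>Fconf. in_Wbar GW (f z)) \<and>
     (\<forall>w'. in_Wdual sW GW w' \<longrightarrow> rational_Fn (\<lambda>z. pairing GW w' (f z)))"

text \<open>A linear map V^{\<otimes> n} \<rightarrow> W-tilde is represented (universal property of the tensor
product) by a map on n-tuples that is linear in each slot.\<close>
definition multilinear_Phi :: "(complex \<Rightarrow> 'v::ab_group_add \<Rightarrow> 'v) \<Rightarrow> (complex \<Rightarrow> 'w::ab_group_add \<Rightarrow> 'w) \<Rightarrow>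
     ('v ^ 'n \<Rightarrow> complex ^ 'n \<Rightarrow> complex \<Rightarrow> 'w) \<Rightarrow> bool" where
  "multilinear_Phi sV sW Phi \<longleftrightarrow> (\<forall>v i a x y z m.
     Phi (vupd v i (sV a x + y)) z m = sW a (Phi (vupd v i x) z m) + Phi (vupd v i y) z m)"

definition L_derivative_property ::
  "(complex \<Rightarrow> 'w::ab_group_add \<Rightarrow> 'w) \<Rightarrow> (complex \<Rightarrow> 'w set) \<Rightarrow> ('v \<Rightarrow> 'v) \<Rightarrow> ('w \<Rightarrow> 'w) \<Rightarrow>
   ('v ^ 'n \<Rightarrow> complex ^ 'n \<Rightarrow> complex \<Rightarrow> 'w) \<Rightarrow> bool" where
  "L_derivative_property sW GW LV LW Phi \<longleftrightarrow>
     (\<forall>v w' z i. in_Wdual sW GW w' \<longrightarrow> z \<in> Fconf \<longrightarrow>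
        ((\<lambda>t. pairing GW w' (Phi v (vupd z i t))) has_field_derivative
           pairing GW w' (Phi (vupd v i (LV (v $ i))) z)) (at (z $ i))) \<and>
     (\<forall>v w' z. in_Wdual sW GW w' \<longrightarrow> z \<in> Fconf \<longrightarrow>
        (\<Sum>i\<in>UNIV. deriv (\<lambda>t. pairing GW w' (Phi v (vupd z i t))) (z $ i))
          = pairing GW w' (Lbar LW (Phi v z)))"

end

theory Submission
  imports Defs "HOL-Complex_Analysis.Cauchy_Integral_Formula"
begin

(* For (a), let h_k(t) be the pairing of w' o L_W(-1)^k with Phi(v)(z_1 + t, ..., z_n + t).
   The pairing is a rational function, hence differentiable on the configuration space, so by
   the chain rule its derivative along the diagonal is the sum of its partial derivatives, which
   property (ii) identifies with h_(k+1).  Thus h_0 is entire with Taylor coefficients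
   h_k(0)/k!.  Since w' is supported in finitely many weights and the weights of W are bounded
   below, w' o L_W(-1)^k = 0 for large k: the Taylor series is a finite sum, and it is precisely
   the pairing of w' with e^(z L_W(-1)) Phi(v)(z_1, ..., z_n).

   For (b), replacing v_i by L_V(-1)^k v_i gives functions g_k of the shift of z_i with
   g_k' = g_(k+1) by property (i), on every disc in which z_i + t meets no other z_j; (b) is
   the Taylor expansion of g_0 on such a disc. *)

lemma differentiable_prod:
  fixes f :: "'i \<Rightarrow> 'a::real_normed_vector \<Rightarrow> 'b::real_normed_field"
  assumes "\<And>i. i \<in> I \<Longrightarrow> f i differentiable (at x within S)"
  shows "(\<lambda>x. \<Prod>i\<in>I. f i x) differentiable (at x within S)"
proof -
  obtain D where "\<And>i. i \<in> I \<Longrightarrow> (f i has_derivative D i) (at x within S)"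
    using assms unfolding differentiable_def by metis
  then show ?thesis
    unfolding differentiable_def by (blast intro: has_derivative_prod)
qed

lemma open_Fconf: "open (Fconf :: (complex ^ 'n::finite) set)"
proof -
  have "Fconf = (\<Inter>(i, j)\<in>{(i, j). i \<noteq> j}. {z::complex ^ 'n. z $ i \<noteq> z $ j})"
    unfolding Fconf_def by auto
  also have "open \<dots>"
  proof (rule open_INT)
    show "finite {(i, j). (i::'n) \<noteq> j}"
      by (rule finite_subset[OF subset_UNIV]) simp
  qed (auto intro!: open_Collect_neq linear_continuous_on bounded_linear_vec_nth)
  finally show ?thesis .
qed

lemma rational_Fn_differentiable:
  fixes f :: "complex ^ 'n::finite \<Rightarrow> complex"
  assumes "rational_Fn f" and "z \<in> Fconf"
  shows "f differentiable (at z)"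
proof -
  obtain A c N where A: "finite A" and
    eq: "\<forall>z\<in>Fconf. f z = (\<Sum>\<alpha>\<in>A. c \<alpha> * (\<Prod>i\<in>UNIV. (z $ i) ^ \<alpha> i)) /
                        (\<Prod>i\<in>UNIV. \<Prod>j\<in>UNIV. if i = j then 1 else (z $ i - z $ j) ^ N)"
    using assms(1) unfolding rational_Fn_def by blast
  have nth: "(\<lambda>z::complex ^ 'n. z $ i) differentiable (at z)" for i
    by (rule bounded_linear_imp_differentiable[OF bounded_linear_vec_nth])
  have factor: "(\<lambda>z. if i = j then 1 else (z $ i - z $ j) ^ N) differentiable (at z)" for i j
    by (cases "i = j") (simp_all add: nth)
  have "(\<lambda>z. (\<Sum>\<alpha>\<in>A. c \<alpha> * (\<Prod>i\<in>UNIV. (z $ i) ^ \<alpha> i)) /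
          (\<Prod>i\<in>UNIV. \<Prod>j\<in>UNIV. if i = j then 1 else (z $ i - z $ j) ^ N)) differentiable (at z)"
    using assms(2) A
    by (intro differentiable_divide differentiable_sum differentiable_mult differentiable_prod
              differentiable_power differentiable_const nth factor ballI)
       (auto simp: Fconf_def prod_zero_iff)
  then obtain D where "((\<lambda>z. (\<Sum>\<alpha>\<in>A. c \<alpha> * (\<Prod>i\<in>UNIV. (z $ i) ^ \<alpha> i)) /
      (\<Prod>i\<in>UNIV. \<Prod>j\<in>UNIV. if i = j then 1 else (z $ i - z $ j) ^ N)) has_derivative D) (at z)"
    unfolding differentiable_def by blast
  then have "(f has_derivative D) (at z)"
    by (rule has_derivative_transform_within_open[OF _ open_Fconf assms(2)]) (simp add: eq)
  then show ?thesis
    unfolding differentiable_def by blast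
qed

lemma bounded_linear_axis: "bounded_linear (axis i :: complex \<Rightarrow> complex ^ 'n::finite)"
proof -
  have "linear (axis i :: complex \<Rightarrow> complex ^ 'n)"
    by (rule linearI) (simp_all add: axis_def vec_eq_iff)
  then show ?thesis
    by (simp add: linear_conv_bounded_linear)
qed

lemma vupd_nth [simp]: "vupd v i x $ i = x"
  by (simp add: vupd_def)

lemma vupd_vupd [simp]: "vupd (vupd v i x) i y = vupd v i y"
  by (simp add: vupd_def vec_eq_iff)

lemma vupd_nth_self [simp]: "vupd v i (v $ i) = v"
  by (simp add: vupd_def vec_eq_iff)

lemma vupd_eq_add_axis: "vupd (p :: 'a::ab_group_add ^ 'n) i s = p + axis i (s - p $ i)"
  by (auto simp: vupd_def axis_def vec_eq_iff)

lemma has_derivative_axis_eq_partial: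
  fixes F :: "complex ^ 'n::finite \<Rightarrow> complex"
  assumes F: "(F has_derivative D) (at p)"
    and partial: "((\<lambda>s. F (vupd p i s)) has_field_derivative c) (at (p $ i))"
  shows "D (axis i h) = c * h"
proof -
  have "((\<lambda>s. s - p $ i) has_derivative (\<lambda>h. h)) (at (p $ i))"
    using has_derivative_diff[OF has_derivative_ident has_derivative_const] by simp
  then have curve: "((\<lambda>s. p + axis i (s - p $ i)) has_derivative axis i) (at (p $ i))"
    using has_derivative_add[OF has_derivative_const
            bounded_linear.has_derivative[OF bounded_linear_axis]] by fastforce
  have "(F has_derivative D) (at (p + axis i (p $ i - p $ i)))"
    using F by (simp add: axis_def zero_vec_def[symmetric])
  from has_derivative_compose[OF curve this]
  have "((\<lambda>s. F (vupd p i s)) has_derivative (\<lambda>h. D (axis i h))) (at (p $ i))"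
    by (simp add: vupd_eq_add_axis)
  moreover have "((\<lambda>s. F (vupd p i s)) has_derivative (\<lambda>h. c * h)) (at (p $ i))"
    using partial by (simp add: has_field_derivative_def)
  ultimately show ?thesis
    by (metis has_derivative_unique)
qed

lemma has_field_derivative_diagonal:
  fixes F :: "complex ^ 'n::finite \<Rightarrow> complex"
  assumes F: "(F has_derivative D) (at p)"
    and partial: "\<And>i. ((\<lambda>s. F (vupd p i s)) has_field_derivative c i) (at (p $ i))"
  shows "((\<lambda>t. F (p + (\<chi> j. t))) has_field_derivative (\<Sum>i\<in>UNIV. c i)) (at 0)"
proof -
  have const_vec: "(\<chi> j. h) = (\<Sum>i\<in>UNIV. axis i h)" for h :: complex
    by (simp add: vec_eq_iff axis_def)
  have "bounded_linear (\<lambda>h::complex. \<chi> j::'n. h)"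
    unfolding const_vec by (intro bounded_linear_sum bounded_linear_axis)
  then have "((\<lambda>t. p + (\<chi> j. t)) has_derivative (\<lambda>h. \<chi> j. h)) (at 0)"
    using has_derivative_add[OF has_derivative_const
            bounded_linear.has_derivative[OF _ has_derivative_ident]]
    by fastforce
  moreover have "(F has_derivative D) (at (p + (\<chi> j. 0)))"
    using F by (simp add: zero_vec_def[symmetric])
  ultimately have "((\<lambda>t. F (p + (\<chi> j. t))) has_derivative (\<lambda>h. D (\<chi> j. h))) (at 0)"
    by (rule has_derivative_compose)
  moreover have "D (\<chi> j. h) = (\<Sum>i\<in>UNIV. c i) * h" for h
    using has_derivative_bounded_linear[OF F]
    by (simp add: const_vec linear_sum[OF bounded_linear.linear]
                  has_derivative_axis_eq_partial[OF F partial] sum_distrib_right)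
  ultimately show ?thesis
    by (simp add: has_field_derivative_def)
qed

lemma higher_deriv_chain:
  fixes g :: "nat \<Rightarrow> complex \<Rightarrow> complex"
  assumes S: "open S"
    and g: "\<And>k t. t \<in> S \<Longrightarrow> (g k has_field_derivative g (Suc k) t) (at t)"
    and t: "t \<in> S"
  shows "(deriv ^^ k) (g 0) t = g k t"
  using t
proof (induction k arbitrary: t)
  case (Suc k)
  have "((deriv ^^ k) (g 0) has_field_derivative g (Suc k) t) (at t)"
    by (rule has_field_derivative_transform_within_open[OF g[OF Suc.prems] S Suc.prems])
       (simp add: Suc.IH)
  then show ?case
    by (simp add: DERIV_imp_deriv)
qed simp

lemma power_series_of_derivative_chain:
  fixes g :: "nat \<Rightarrow> complex \<Rightarrow> complex"
  assumes g: "\<And>k t. norm t < r \<Longrightarrow> (g k has_field_derivative g (Suc k) t) (at t)"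
    and z: "norm z < r"
  shows "summable (\<lambda>k. norm (g k 0 / fact k * z ^ k)) \<and> (\<lambda>k. g k 0 / fact k * z ^ k) sums g 0 z"
proof -
  have "g 0 holomorphic_on ball 0 r"
  proof (rule holomorphic_onI)
    fix t :: complex
    assume "t \<in> ball 0 r"
    then have "(g 0 has_field_derivative g 1 t) (at t)"
      using g[of t 0] by simp
    then show "g 0 field_differentiable at t within ball 0 r"
      unfolding field_differentiable_def by (blast intro: has_field_derivative_at_within)
  qed
  moreover have "(deriv ^^ k) (g 0) 0 = g k 0" for k
    using z by (intro higher_deriv_chain[of "ball 0 r"] g)
               (auto intro: le_less_trans[OF norm_ge_zero])
  ultimately have sums: "(\<lambda>k. g k 0 / fact k * w ^ k) sums g 0 w" if "norm w < r" for w
    using holomorphic_power_series[of "g 0" 0 r w] that by simp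
  obtain \<rho> where \<rho>: "norm z < \<rho>" "\<rho> < r"
    using z dense by blast
  then have "0 \<le> \<rho>"
    using norm_ge_zero[of z] by linarith
  then have "norm (complex_of_real \<rho>) = \<rho>"
    by simp
  then have "summable (\<lambda>k. g k 0 / fact k * complex_of_real \<rho> ^ k)"
    and "norm z < norm (complex_of_real \<rho>)"
    using sums_summable[OF sums] \<rho> by auto
  then have "summable (\<lambda>k. norm (g k 0 / fact k * z ^ k))"
    by (rule powser_insidea)
  then show ?thesis
    using sums[OF z] by blast
qed

definition dual_support :: "(complex \<Rightarrow> 'w set) \<Rightarrow> ('w \<Rightarrow> complex) \<Rightarrow> complex set" where
  "dual_support GW w' = {n. \<exists>x\<in>GW n. w' x \<noteq> 0}"

lemma pairing_dual_support: "pairing GW w' X = (\<Sum>n\<in>dual_support GW w'. w' (X n))"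
  by (simp add: pairing_def dual_support_def)

lemma finite_dual_support:
  assumes "in_Wdual sW GW w'"
  shows "finite (dual_support GW w')"
proof -
  obtain S where "finite S" and "\<forall>n. n \<notin> S \<longrightarrow> (\<forall>x\<in>GW n. w' x = 0)"
    using assms by (auto simp: in_Wdual_def)
  then show ?thesis
    by (auto simp: dual_support_def intro: finite_subset)
qed

lemma linear_funpow:
  assumes "Vector_Spaces.linear s s L"
  shows "Vector_Spaces.linear s s (L ^^ k)"
proof (induction k)
  case 0
  then show ?case
    using assms by (simp add: Vector_Spaces.linear_iff)
next
  case (Suc k)
  then show ?case
    unfolding funpow.simps(2) by (rule Vector_Spaces.linear_compose[OF _ assms])
qed

lemma funpow_in_shifted_grade:
  assumes "\<forall>n. L ` GW n \<subseteq> GW (n + 1)" and "x \<in> GW n"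
  shows "(L ^^ k) x \<in> GW (n + of_nat k)"
proof (induction k)
  case (Suc k)
  then have "L ((L ^^ k) x) \<in> GW (n + of_nat k + 1)"
    using assms(1) by blast
  then show ?case
    by (simp add: add_ac)
qed (simp add: assms(2))

lemma in_Wdual_comp_funpow:
  assumes w': "in_Wdual sW GW w'" and L: "Vector_Spaces.linear sW sW L"
    and grade: "\<forall>n. L ` GW n \<subseteq> GW (n + 1)"
  shows "in_Wdual sW GW (\<lambda>x. w' ((L ^^ k) x))"
proof -
  obtain S where S: "finite S" "\<forall>n. n \<notin> S \<longrightarrow> (\<forall>x\<in>GW n. w' x = 0)"
    using w' by (auto simp: in_Wdual_def)
  have "Vector_Spaces.linear sW (*) w'"
    using w' by (simp add: in_Wdual_def)
  then have "Vector_Spaces.linear sW (*) (w' \<circ> L ^^ k)"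
    by (rule Vector_Spaces.linear_compose[OF linear_funpow[OF L]])
  moreover have "\<forall>n. n \<notin> (\<lambda>m. m - of_nat k) ` S \<longrightarrow> (\<forall>x\<in>GW n. w' ((L ^^ k) x) = 0)"
    using S(2) funpow_in_shifted_grade[OF grade] by (metis add_diff_cancel image_eqI)
  ultimately show ?thesis
    using S(1) by (auto simp: in_Wdual_def comp_def)
qed

lemma pairing_comp_funpow:
  assumes w': "in_Wdual sW GW w'" and L: "Vector_Spaces.linear sW sW L"
    and grade: "\<forall>n. L ` GW n \<subseteq> GW (n + 1)" and X: "in_Wbar GW X"
  shows "(\<Sum>n\<in>dual_support GW w'. w' ((L ^^ k) (X (n - of_nat k))))
       = pairing GW (\<lambda>x. w' ((L ^^ k) x)) X"
proof -
  have "(\<Sum>n\<in>dual_support GW w'. w' ((L ^^ k) (X (n - of_nat k))))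
      = (\<Sum>m\<in>(\<lambda>n. n - of_nat k) ` dual_support GW w'. w' ((L ^^ k) (X m)))"
    by (simp add: sum.reindex inj_on_def)
  also have "\<dots> = (\<Sum>m\<in>dual_support GW (\<lambda>x. w' ((L ^^ k) x)). w' ((L ^^ k) (X m)))"
  proof (rule sum.mono_neutral_cong)
    fix m
    assume "m \<in> dual_support GW (\<lambda>x. w' ((L ^^ k) x)) - (\<lambda>n. n - of_nat k) ` dual_support GW w'"
    then have "m + of_nat k \<notin> dual_support GW w'"
      by (metis DiffD2 add_diff_cancel image_eqI)
    moreover have "(L ^^ k) (X m) \<in> GW (m + of_nat k)"
      using X funpow_in_shifted_grade[OF grade] by (simp add: in_Wbar_def)
    ultimately show "w' ((L ^^ k) (X m)) = 0"
      by (auto simp: dual_support_def)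
  next
    fix m
    assume "m \<in> (\<lambda>n. n - of_nat k) ` dual_support GW w' - dual_support GW (\<lambda>x. w' ((L ^^ k) x))"
    then show "w' ((L ^^ k) (X m)) = 0"
      using X by (auto simp: dual_support_def in_Wbar_def)
  qed (use finite_dual_support[OF w'] finite_dual_support[OF in_Wdual_comp_funpow[OF w' L grade]] in auto)
  finally show ?thesis
    by (simp add: pairing_dual_support)
qed

lemma pairing_Lbar:
  assumes "in_Wdual sW GW w'" and "Vector_Spaces.linear sW sW L"
    and "\<forall>n. L ` GW n \<subseteq> GW (n + 1)" and "in_Wbar GW X"
  shows "pairing GW w' (Lbar L X) = pairing GW (\<lambda>x. w' (L x)) X"
  using pairing_comp_funpow[OF assms, of 1] by (simp add: pairing_dual_support Lbar_def)

lemma comp_funpow_eventually_zero: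
  assumes w': "in_Wdual sW GW w'" and L: "Vector_Spaces.linear sW sW L"
    and grade: "\<forall>n. L ` GW n \<subseteq> GW (n + 1)"
    and lower: "\<exists>N::real. \<forall>n. Re n < N \<longrightarrow> GW n = {0}"
  shows "\<exists>K. \<forall>k\<ge>K. \<forall>n. \<forall>x\<in>GW n. w' ((L ^^ k) x) = 0"
proof -
  obtain N :: real where N: "\<And>n. Re n < N \<Longrightarrow> GW n = {0}"
    using lower by blast
  define B where "B = Max (Re ` dual_support GW w')"
  have B: "Re s \<le> B" if "s \<in> dual_support GW w'" for s
    unfolding B_def using finite_dual_support[OF w'] that by simp
  have "w' ((L ^^ k) x) = 0" if k: "k \<ge> nat \<lceil>B - N\<rceil> + 1" and x: "x \<in> GW n" for k n x
  proof (cases "n + of_nat k \<in> dual_support GW w'")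
    case True
    then have "Re n < N"
      using B[OF True] k by simp linarith
    then have "x = 0"
      using N x by blast
    moreover have "module_hom sW (*) w'"
      using w' by (simp add: in_Wdual_def module_hom_linearI)
    moreover have "(L ^^ k) 0 = 0"
      by (rule module_hom.zero[OF module_hom_linearI[OF linear_funpow[OF L]]])
    ultimately show ?thesis
      by (simp add: module_hom.zero)
  next
    case False
    then show ?thesis
      using funpow_in_shifted_grade[OF grade x] by (auto simp: dual_support_def)
  qed
  then show ?thesis
    by blast
qed

lemma finite_Wbar_lower_support:
  assumes X: "in_Wbar GW X" and lower: "\<exists>N::real. \<forall>n. Re n < N \<longrightarrow> GW n = {0}"
  shows "finite {k::nat. X (n - of_nat k) \<noteq> 0}"
proof -
  obtain N :: real where N: "\<And>n. Re n < N \<Longrightarrow> GW n = {0}"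
    using lower by blast
  have "{k::nat. X (n - of_nat k) \<noteq> 0} \<subseteq> {..nat \<lceil>Re n - N\<rceil>}"
  proof
    fix k
    assume "k \<in> {k::nat. X (n - of_nat k) \<noteq> 0}"
    then have "\<not> Re (n - of_nat k) < N"
      using N X by (force simp: in_Wbar_def)
    then show "k \<in> {..nat \<lceil>Re n - N\<rceil>}"
      by simp linarith
  qed
  then show ?thesis
    by (rule finite_subset) simp
qed

lemma pairing_expLbar:
  assumes w': "in_Wdual sW GW w'" and L: "Vector_Spaces.linear sW sW L"
    and grade: "\<forall>n. L ` GW n \<subseteq> GW (n + 1)"
    and lower: "\<exists>N::real. \<forall>n. Re n < N \<longrightarrow> GW n = {0}"
    and X: "in_Wbar GW X"
    and K: "\<forall>k\<ge>K. \<forall>n. \<forall>x\<in>GW n. w' ((L ^^ k) x) = 0"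
  shows "pairing GW w' (expLbar sW L z X)
       = (\<Sum>k<K. z ^ k / fact k * pairing GW (\<lambda>x. w' ((L ^^ k) x)) X)"
proof -
  have w'_hom: "module_hom sW (*) w'"
    using w' by (simp add: in_Wdual_def module_hom_linearI)
  define T where "T n = {k::nat. X (n - of_nat k) \<noteq> 0}" for n
  define G where "G n k = z ^ k / fact k * w' ((L ^^ k) (X (n - of_nat k)))" for n k
  have G_zero: "G n k = 0" if "k \<notin> T n \<inter> {..<K}" for n k
  proof (cases "k < K")
    case True
    then have "X (n - of_nat k) = 0"
      using that by (simp add: T_def)
    then show ?thesis
      using module_hom.zero[OF module_hom_linearI[OF linear_funpow[OF L]]]
      by (simp add: G_def module_hom.zero[OF w'_hom])
  next
    case False
    moreover have "X (n - of_nat k) \<in> GW (n - of_nat k)"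
      using X by (simp add: in_Wbar_def)
    ultimately show ?thesis
      using K by (simp add: G_def not_less)
  qed
  have inner: "(\<Sum>k\<in>T n. G n k) = (\<Sum>k<K. G n k)" for n
    using finite_Wbar_lower_support[OF X lower]
    by (intro sum.mono_neutral_cong) (auto simp: T_def G_zero)
  have "pairing GW w' (expLbar sW L z X)
      = (\<Sum>n\<in>dual_support GW w'. \<Sum>k\<in>T n. G n k)"
    by (simp add: pairing_dual_support expLbar_def T_def G_def module_hom.sum[OF w'_hom]
                  module_hom.scale[OF w'_hom])
  also have "\<dots> = (\<Sum>k<K. \<Sum>n\<in>dual_support GW w'. G n k)"
    by (simp add: inner sum.swap[of _ _ "{..<K}"])
  also have "\<dots> = (\<Sum>k<K. z ^ k / fact k *
                 (\<Sum>n\<in>dual_support GW w'. w' ((L ^^ k) (X (n - of_nat k)))))"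
    by (simp only: G_def sum_distrib_left)
  also have "\<dots> = (\<Sum>k<K. z ^ k / fact k * pairing GW (\<lambda>x. w' ((L ^^ k) x)) X)"
    by (simp only: pairing_comp_funpow[OF w' L grade X])
  finally show ?thesis .
qed

lemma translation_derivative:
  fixes Phi :: "'v ^ 'n::finite \<Rightarrow> complex ^ 'n \<Rightarrow> complex \<Rightarrow> 'w::ab_group_add"
  assumes Phi: "in_Wtilde sW GW (Phi v)" and Lder: "L_derivative_property sW GW LV L1 Phi"
    and w': "in_Wdual sW GW w'" and zz: "zz \<in> Fconf"
  shows "((\<lambda>s. pairing GW w' (Phi v (\<chi> j. zz $ j + s))) has_field_derivative
           pairing GW w' (Lbar L1 (Phi v (\<chi> j. zz $ j + t)))) (at t)"
proof -
  define p where "p = (\<chi> j. zz $ j + t)"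
  define F where "F z = pairing GW w' (Phi v z)" for z
  define c where "c i = pairing GW w' (Phi (vupd v i (LV (v $ i))) p)" for i
  have p: "p \<in> Fconf"
    using zz by (simp add: Fconf_def p_def)
  obtain D where F: "(F has_derivative D) (at p)"
    using rational_Fn_differentiable[of F p] Phi w' p
    unfolding in_Wtilde_def F_def differentiable_def by blast
  have partial: "((\<lambda>s. F (vupd p i s)) has_field_derivative c i) (at (p $ i))" for i
    using Lder w' p unfolding L_derivative_property_def F_def c_def by blast
  have "(\<Sum>i\<in>UNIV. c i) = pairing GW w' (Lbar L1 (Phi v p))"
    using Lder w' p DERIV_imp_deriv[OF partial, symmetric]
    unfolding L_derivative_property_def F_def by simp
  then have "((\<lambda>s. F (p + (\<chi> j. s))) has_field_derivative pairing GW w' (Lbar L1 (Phi v p))) (at 0)"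
    using has_field_derivative_diagonal[OF F partial] by simp
  moreover have "p + (\<chi> j. s) = (\<chi> j. zz $ j + (s + t))" for s
    by (simp add: p_def vec_eq_iff algebra_simps)
  ultimately show ?thesis
    using DERIV_shift[where x = 0 and z = t] by (simp add: F_def p_def)
qed

lemma pairing_expLbar_eq_translate:
  fixes Phi :: "'v ^ 'n::finite \<Rightarrow> complex ^ 'n \<Rightarrow> complex \<Rightarrow> 'w::ab_group_add"
  assumes Phi: "in_Wtilde sW GW (Phi v)" and Lder: "L_derivative_property sW GW LV L1 Phi"
    and L1: "Vector_Spaces.linear sW sW L1" and grade: "\<forall>n. L1 ` GW n \<subseteq> GW (n + 1)"
    and lower: "\<exists>N::real. \<forall>n. Re n < N \<longrightarrow> GW n = {0}"
    and w': "in_Wdual sW GW w'" and zz: "zz \<in> Fconf"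
  shows "pairing GW w' (expLbar sW L1 z (Phi v zz)) = pairing GW w' (Phi v (\<chi> j. zz $ j + z))"
proof -
  define h where "h k t = pairing GW (\<lambda>x. w' ((L1 ^^ k) x)) (Phi v (\<chi> j. zz $ j + t))" for k t
  have zz_shift: "(\<chi> j. zz $ j + 0) = zz"
    by (simp add: vec_eq_iff)
  have "(\<chi> j. zz $ j + t) \<in> Fconf" for t
    using zz by (simp add: Fconf_def)
  then have X: "in_Wbar GW (Phi v (\<chi> j. zz $ j + t))" for t
    using Phi by (simp add: in_Wtilde_def)
  have h': "(h k has_field_derivative h (Suc k) t) (at t)" for k t
    unfolding h_def
    using translation_derivative[OF Phi Lder in_Wdual_comp_funpow[OF w' L1 grade] zz]
          pairing_Lbar[OF in_Wdual_comp_funpow[OF w' L1 grade] L1 grade X]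
    by (simp add: funpow_swap1)
  obtain K where K: "\<forall>k\<ge>K. \<forall>n. \<forall>x\<in>GW n. w' ((L1 ^^ k) x) = 0"
    using comp_funpow_eventually_zero[OF w' L1 grade lower] by blast
  have "h k t = 0" if "k \<ge> K" for k t
    using K that by (simp add: h_def pairing_dual_support dual_support_def)
  then have "(\<lambda>k. h k 0 / fact k * z ^ k) sums (\<Sum>k<K. h k 0 / fact k * z ^ k)"
    by (intro sums_finite) auto
  moreover have "(\<lambda>k. h k 0 / fact k * z ^ k) sums h 0 z"
    using power_series_of_derivative_chain[of "norm z + 1" h z] h' by simp
  ultimately have "h 0 z = (\<Sum>k<K. h k 0 / fact k * z ^ k)"
    by (simp add: sums_unique2)
  also have "\<dots> = pairing GW w' (expLbar sW L1 z (Phi v zz))"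
    using pairing_expLbar[OF w' L1 grade lower X[of 0] K]
    by (simp add: h_def zz_shift mult.commute)
  finally show ?thesis
    by (simp add: h_def)
qed

lemma vupd_shift_in_Fconf:
  assumes zz: "zz \<in> Fconf" and t: "\<And>k. k \<noteq> i \<Longrightarrow> norm t < norm (zz $ k - zz $ i)"
  shows "vupd zz i (zz $ i + t) \<in> Fconf"
proof -
  have "zz $ i + t \<noteq> zz $ k" if "k \<noteq> i" for k
  proof
    assume "zz $ i + t = zz $ k"
    then have "t = zz $ k - zz $ i"
      by (simp add: algebra_simps)
    then show False
      using t[OF that] by simp
  qed
  then show ?thesis
    using zz unfolding Fconf_def vupd_def by (auto simp: eq_commute)
qed

lemma slot_shift_derivative:
  assumes Lder: "L_derivative_property sW GW LV L1 Phi"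
    and w': "in_Wdual sW GW w'" and shifted: "vupd zz i (zz $ i + t) \<in> Fconf"
  shows "((\<lambda>s. pairing GW w' (Phi v (vupd zz i (zz $ i + s)))) has_field_derivative
           pairing GW w' (Phi (vupd v i (LV (v $ i))) (vupd zz i (zz $ i + t)))) (at t)"
proof -
  define p where "p = vupd zz i (zz $ i + t)"
  have "((\<lambda>s. pairing GW w' (Phi v (vupd p i s))) has_field_derivative
           pairing GW w' (Phi (vupd v i (LV (v $ i))) p)) (at (p $ i))"
    using Lder w' shifted unfolding L_derivative_property_def p_def by blast
  moreover have "vupd p i s = vupd zz i s" for s
    by (simp add: p_def)
  moreover have "p $ i = t + zz $ i"
    by (simp add: p_def add.commute)
  ultimately have "((\<lambda>s. pairing GW w' (Phi v (vupd zz i (s + zz $ i)))) has_field_derivative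
           pairing GW w' (Phi (vupd v i (LV (v $ i))) p)) (at t)"
    by (simp only: DERIV_shift)
  then show ?thesis
    by (simp add: p_def add.commute)
qed

lemma slot_derivative_chain:
  assumes Lder: "L_derivative_property sW GW LV L1 Phi"
    and w': "in_Wdual sW GW w'" and shifted: "vupd zz i (zz $ i + t) \<in> Fconf"
  shows "((\<lambda>s. pairing GW w' (Phi (vupd v i ((LV ^^ k) (v $ i))) (vupd zz i (zz $ i + s))))
           has_field_derivative
           pairing GW w' (Phi (vupd v i ((LV ^^ Suc k) (v $ i))) (vupd zz i (zz $ i + t)))) (at t)"
  using slot_shift_derivative[OF Lder w' shifted, of "vupd v i ((LV ^^ k) (v $ i))"]
  by simp

lemma slot_shift_radius:
  assumes zz: "zz \<in> Fconf" and z: "\<forall>j k. j \<noteq> k \<longrightarrow> norm z < norm (zz $ j - zz $ k)"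
  obtains r where "norm z < r" and "\<And>t. norm t < r \<Longrightarrow> vupd zz i (zz $ i + t) \<in> Fconf"
proof -
  define M where "M = (\<lambda>(j, k). norm (zz $ j - zz $ k)) ` {(j, k). j \<noteq> k}"
  define r where "r = Min (insert (norm z + 1) M)"
  have M: "finite M"
    unfolding M_def by (rule finite_imageI[OF finite_subset[OF subset_UNIV]]) simp
  have "norm z < r"
    using M z by (auto simp: r_def M_def)
  moreover have "norm t < norm (zz $ k - zz $ i)" if "norm t < r" and "k \<noteq> i" for t k
  proof -
    have "r \<le> norm (zz $ k - zz $ i)"
      using M \<open>k \<noteq> i\<close> unfolding r_def M_def by (auto intro!: Min_le)
    then show ?thesis
      using \<open>norm t < r\<close> by simp
  qed
  ultimately show thesis
    using that vupd_shift_in_Fconf[OF zz] by blast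
qed

lemma higher_deriv_slot_shift:
  assumes Lder: "L_derivative_property sW GW LV L1 Phi"
    and w': "in_Wdual sW GW w'" and zz: "zz \<in> Fconf"
  shows "(deriv ^^ k) (\<lambda>t. pairing GW w' (Phi v (vupd zz i (zz $ i + t)))) 0
       = pairing GW w' (Phi (vupd v i ((LV ^^ k) (v $ i))) zz)"
proof -
  define g where "g k t = pairing GW w' (Phi (vupd v i ((LV ^^ k) (v $ i))) (vupd zz i (zz $ i + t)))"
    for k t
  have "\<forall>j k. j \<noteq> k \<longrightarrow> norm (0::complex) < norm (zz $ j - zz $ k)"
    using zz by (simp add: Fconf_def)
  then obtain r where "0 < r" and r: "\<And>t. norm t < r \<Longrightarrow> vupd zz i (zz $ i + t) \<in> Fconf"
    using slot_shift_radius[OF zz] by (metis norm_zero)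
  have "(deriv ^^ k) (g 0) 0 = g k 0"
    using \<open>0 < r\<close> slot_derivative_chain[OF Lder w' r]
    by (intro higher_deriv_chain[of "ball 0 r"]) (auto simp: g_def)
  moreover have "g 0 = (\<lambda>t. pairing GW w' (Phi v (vupd zz i (zz $ i + t))))"
    by (simp add: g_def fun_eq_iff)
  ultimately show ?thesis
    by (simp add: g_def)
qed

lemma slot_shift_power_series:
  fixes Phi :: "'v ^ 'n::finite \<Rightarrow> complex ^ 'n \<Rightarrow> complex \<Rightarrow> 'w::ab_group_add"
    and v :: "'v ^ 'n" and i :: 'n
  assumes Lder: "L_derivative_property sW GW LV L1 Phi"
    and w': "in_Wdual sW GW w'" and zz: "zz \<in> Fconf"
    and z: "\<forall>j k. j \<noteq> k \<longrightarrow> norm z < norm (zz $ j - zz $ k)"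
  defines "a \<equiv> \<lambda>k. pairing GW w' (Phi (vupd v i ((LV ^^ k) (v $ i))) zz) / fact k"
  shows "summable (\<lambda>k. norm (a k * z ^ k))
       \<and> (\<lambda>k. a k * z ^ k) sums pairing GW w' (Phi v (vupd zz i (zz $ i + z)))"
proof -
  define g where "g k t = pairing GW w' (Phi (vupd v i ((LV ^^ k) (v $ i))) (vupd zz i (zz $ i + t)))"
    for k t
  obtain r where "norm z < r" and r: "\<And>t. norm t < r \<Longrightarrow> vupd zz i (zz $ i + t) \<in> Fconf"
    using slot_shift_radius[OF zz z] by blast
  then have "summable (\<lambda>k. norm (g k 0 / fact k * z ^ k)) \<and> (\<lambda>k. g k 0 / fact k * z ^ k) sums g 0 z"
    using slot_derivative_chain[OF Lder w' r]
    by (intro power_series_of_derivative_chain) (auto simp: g_def)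
  then show ?thesis
    by (simp add: g_def a_def)
qed

theorem proposition3p4:
  fixes sV :: "complex \<Rightarrow> 'v::ab_group_add \<Rightarrow> 'v" and GV :: "int \<Rightarrow> 'v set"
    and Y :: "'v \<Rightarrow> 'v \<Rightarrow> int \<Rightarrow> 'v" and one :: 'v
    and sW :: "complex \<Rightarrow> 'w::ab_group_add \<Rightarrow> 'w" and GW :: "complex \<Rightarrow> 'w set"
    and YW :: "'v \<Rightarrow> 'w \<Rightarrow> int \<Rightarrow> 'w" and L0 L1 :: "'w \<Rightarrow> 'w"
    and Phi :: "'v ^ 'n \<Rightarrow> complex ^ 'n \<Rightarrow> complex \<Rightarrow> 'w"
  assumes VA: "grading_restricted_VA sV GV Y one"
    and MOD: "grading_restricted_gen_module sV GV Y one sW GW YW L0 L1"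
    and lin: "multilinear_Phi sV sW Phi"
    and codom: "\<And>v. in_Wtilde sW GW (Phi v)"
    and Lder: "L_derivative_property sW GW (LVm1 Y one) L1 Phi"
  shows
    "(\<forall>v w' zz z. in_Wdual sW GW w' \<longrightarrow> zz \<in> Fconf \<longrightarrow>
        pairing GW w' (expLbar sW L1 z (Phi v zz)) = pairing GW w' (Phi v (\<chi> j. zz $ j + z)))
   \<and> (\<forall>v w' zz i. in_Wdual sW GW w' \<longrightarrow> zz \<in> Fconf \<longrightarrow>
        (let g = (\<lambda>t. pairing GW w' (Phi v (vupd zz i (zz $ i + t))));
             a = (\<lambda>k. pairing GW w' (Phi (vupd v i ((LVm1 Y one ^^ k) (v $ i))) zz) / fact k)
         in (\<forall>k. (deriv ^^ k) g 0 / fact k = a k) \<and>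
            (\<forall>z. (\<forall>j k. j \<noteq> k \<longrightarrow> norm z < norm (zz $ j - zz $ k)) \<longrightarrow>
                 summable (\<lambda>k. norm (a k * z ^ k)) \<and> (\<lambda>k. a k * z ^ k) sums g z)))"
proof -
  have L1: "Vector_Spaces.linear sW sW L1"
    and grade: "\<forall>n. L1 ` GW n \<subseteq> GW (n + 1)"
    and lower: "\<exists>N::real. \<forall>n. Re n < N \<longrightarrow> GW n = {0}"
    using MOD unfolding grading_restricted_gen_module_def by simp_all
  show ?thesis
    unfolding Let_def
    using pairing_expLbar_eq_translate[OF codom Lder L1 grade lower]
          higher_deriv_slot_shift[OF Lder] slot_shift_power_series[OF Lder]
    by simp
qed

end
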